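(* Let $\phi$ be a partial flow on a metric space $X$, let $\Lambda$ be an isolated set of $\phi$, and let $N$ be an isolating neighborhood of $\Lambda$. Then there is a $\phi$-convex open set $U$ with $\Lambda\subset U\subset N$.
   Context: A partial flow on a metric space $X$ is a continuous map $\phi\colon\Gamma\to X$, $\Gamma\subset\mathbb{R}\times X$ open. Here $\Gamma_x=\{t:(t,x)\in\Gamma\}$ is a connected set containing $0$, $\Gamma_{\phi_t(x)}=\Gamma_x-t$, $\phi_0=\mathrm{id}$, and $\phi_s\phi_t(x)=\phi_{s+t}(x)$ whenever $s,t,s+t\in\Gamma_x$. A $\phi$-invariant set $\Lambda$ (one with $\phi_t(x)\in\Lambda$ for $x\in\Lambda$, $t\in\Gamma_x$) is isolated if there is a compact neighborhood $N$ of $\Lambda$ (an isolating neighborhood) such that $\phi_{\Gamma_x}(x)\subseteq N$ implies $x\in\Lambda$. An open set $U$ is $\phi$-convex if, whenever $t\ge0$, $x\in U$, $\phi_t(x)\in U$ and $\phi_{[0,t]}(x)\subset\overline U$, we have $\phi_{[0,t]}(x)\subset U$. *)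

theory Defs
  imports "HOL-Analysis.Analysis"
begin

text \<open>A partial flow on the metric space X (modelled as the whole type 'a).
  The flow is given by its domain Dom (a subset of real x X) and a curried map phi,
  of which only the values on Dom matter.\<close>

definition fiber :: "(real \<times> 'a) set \<Rightarrow> 'a \<Rightarrow> real set" where
  "fiber Dom x = {t. (t, x) \<in> Dom}"

definition partial_flow :: "(real \<times> 'a::metric_space) set \<Rightarrow> (real \<Rightarrow> 'a \<Rightarrow> 'a) \<Rightarrow> bool" where
  "partial_flow Dom phi \<longleftrightarrow>
     open Dom \<and>
     continuous_on Dom (\<lambda>(t, x). phi t x) \<and>
     (\<forall>x. connected (fiber Dom x) \<and> 0 \<in> fiber Dom x) \<and>
     (\<forall>x. \<forall>t \<in> fiber Dom x. fiber Dom (phi t x) = (\<lambda>s. s - t) ` fiber Dom x) \<and>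
     (\<forall>x. phi 0 x = x) \<and>
     (\<forall>x s t. s \<in> fiber Dom x \<and> t \<in> fiber Dom x \<and> s + t \<in> fiber Dom x
        \<longrightarrow> phi s (phi t x) = phi (s + t) x)"

definition flow_invariant :: "(real \<times> 'a) set \<Rightarrow> (real \<Rightarrow> 'a \<Rightarrow> 'a) \<Rightarrow> 'a set \<Rightarrow> bool" where
  "flow_invariant Dom phi L \<longleftrightarrow> (\<forall>x \<in> L. \<forall>t \<in> fiber Dom x. phi t x \<in> L)"

definition isolating_nbhd :: "(real \<times> 'a::metric_space) set \<Rightarrow> (real \<Rightarrow> 'a \<Rightarrow> 'a) \<Rightarrow> 'a set \<Rightarrow> 'a set \<Rightarrow> bool" where
  "isolating_nbhd Dom phi L N \<longleftrightarrow>
     compact N \<and> L \<subseteq> interior N \<and>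
     (\<forall>x. (\<lambda>t. phi t x) ` fiber Dom x \<subseteq> N \<longrightarrow> x \<in> L)"

definition isolated_set :: "(real \<times> 'a::metric_space) set \<Rightarrow> (real \<Rightarrow> 'a \<Rightarrow> 'a) \<Rightarrow> 'a set \<Rightarrow> bool" where
  "isolated_set Dom phi L \<longleftrightarrow> flow_invariant Dom phi L \<and> (\<exists>N. isolating_nbhd Dom phi L N)"

definition flow_convex :: "(real \<times> 'a::metric_space) set \<Rightarrow> (real \<Rightarrow> 'a \<Rightarrow> 'a) \<Rightarrow> 'a set \<Rightarrow> bool" where
  "flow_convex Dom phi U \<longleftrightarrow> open U \<and>
     (\<forall>t x. t \<ge> 0 \<and> x \<in> U \<and> t \<in> fiber Dom x \<and> phi t x \<in> U \<and>
        (\<lambda>s. phi s x) ` {0..t} \<subseteq> closure U \<longrightarrow> (\<lambda>s. phi s x) ` {0..t} \<subseteq> U)"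

end

theory Submission
  imports Defs
begin

text \<open>For \<open>\<epsilon> > 0\<close> let \<open>U\<^sub>\<epsilon>\<close> be the set of points whose forward and whose backward orbit both reach
  the \<open>\<epsilon>\<close>-neighbourhood of \<open>\<Lambda>\<close> without leaving \<open>int N\<close>; it is open by continuity of the flow and
  contains \<open>\<Lambda>\<close>. If points of \<open>U\<^sub>\<epsilon>\<close> with \<open>\<epsilon> \<rightarrow> 0\<close> accumulated at some \<open>y \<in> \<partial>N\<close>, then on the side
  where the orbit of \<open>y \<notin> \<Lambda>\<close> leaves \<open>N\<close> the arrival times would accumulate at a time at which the
  orbit of \<open>y\<close> lies in the closed invariant set \<open>\<Lambda>\<close>, which is absurd. By compactness of \<open>\<partial>N\<close>,
  therefore, \<open>closure U\<^sub>\<epsilon> \<subseteq> int N\<close> for small \<open>\<epsilon>\<close>. Then \<open>U\<^sub>\<epsilon>\<close> is \<open>\<phi>\<close>-convex: a point of an orbit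
  segment from \<open>x \<in> U\<^sub>\<epsilon>\<close> to \<open>\<phi>\<^sub>t(x) \<in> U\<^sub>\<epsilon>\<close> that stays in \<open>closure U\<^sub>\<epsilon> \<subseteq> int N\<close> inherits the
  backward path of \<open>x\<close> and the forward path of \<open>\<phi>\<^sub>t(x)\<close>.\<close>

definition reach_within :: "(real \<times> 'a) set \<Rightarrow> (real \<Rightarrow> 'a \<Rightarrow> 'a) \<Rightarrow> 'a set \<Rightarrow> 'a set \<Rightarrow> 'a set" where
  "reach_within Dom phi W A =
     {y. \<exists>r\<ge>0. (\<forall>s\<in>{0..r}. (s, y) \<in> Dom \<and> phi s y \<in> W) \<and> phi r y \<in> A}"

definition reverse_dom :: "(real \<times> 'a) set \<Rightarrow> (real \<times> 'a) set" where
  "reverse_dom Dom = {(t, x). (-t, x) \<in> Dom}"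

definition reverse_flow :: "(real \<Rightarrow> 'a \<Rightarrow> 'a) \<Rightarrow> real \<Rightarrow> 'a \<Rightarrow> 'a" where
  "reverse_flow phi t x = phi (-t) x"

definition two_sided_reach :: "(real \<times> 'a) set \<Rightarrow> (real \<Rightarrow> 'a \<Rightarrow> 'a) \<Rightarrow> 'a set \<Rightarrow> 'a set \<Rightarrow> 'a set" where
  "two_sided_reach Dom phi W A =
     reach_within Dom phi W A \<inter> reach_within (reverse_dom Dom) (reverse_flow phi) W A"

lemma fiber_reverse_dom: "t \<in> fiber (reverse_dom Dom) x \<longleftrightarrow> -t \<in> fiber Dom x"
  by (simp add: fiber_def reverse_dom_def)

lemma flow_invariant_reverse:
  "flow_invariant Dom phi L \<Longrightarrow> flow_invariant (reverse_dom Dom) (reverse_flow phi) L"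
  unfolding flow_invariant_def by (simp add: fiber_reverse_dom reverse_flow_def)

lemma approximate_in_closures:
  fixes y :: "nat \<Rightarrow> 'a::metric_space"
  assumes y: "\<And>n. y n \<in> closure (S n)" and lim: "y \<longlonglongrightarrow> l"
  obtains z where "\<And>n. z n \<in> S n" "z \<longlonglongrightarrow> l"
proof -
  have "\<exists>z\<in>S n. dist z (y n) < inverse (real (Suc n))" for n
    using y[of n] closure_approachable by (metis inverse_positive_iff_positive of_nat_0_less_iff zero_less_Suc)
  then obtain z where z: "\<And>n. z n \<in> S n" "\<And>n. dist (z n) (y n) < inverse (real (Suc n))"
    by metis
  have "(\<lambda>n. dist (z n) l) \<longlonglongrightarrow> 0"
  proof (rule tendsto_sandwich[OF always_eventually always_eventually])
    show "\<forall>n. 0 \<le> dist (z n) l"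
      by simp
    show "\<forall>n. dist (z n) l \<le> inverse (real (Suc n)) + dist (y n) l"
      using z(2) dist_triangle[of "z _" l "y _"] by (smt (verit))
    show "(\<lambda>n. inverse (real (Suc n)) + dist (y n) l) \<longlonglongrightarrow> 0"
      using tendsto_add[OF LIMSEQ_inverse_real_of_nat tendsto_dist_iff[THEN iffD1, OF lim]] by simp
  qed simp
  then show thesis
    using that z(1) tendsto_dist_iff by blast
qed

locale pflow =
  fixes Dom :: "(real \<times> 'a::metric_space) set" and phi :: "real \<Rightarrow> 'a \<Rightarrow> 'a"
  assumes partial_flow: "partial_flow Dom phi"
begin

lemma open_Dom: "open Dom"
  using partial_flow unfolding partial_flow_def by blast

lemma continuous_on_flow: "continuous_on Dom (\<lambda>(t, x). phi t x)"
  using partial_flow unfolding partial_flow_def by blast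

lemma flow_0 [simp]: "phi 0 x = x"
  using partial_flow unfolding partial_flow_def by blast

lemma zero_in_fiber: "0 \<in> fiber Dom x"
  using partial_flow unfolding partial_flow_def by blast

lemma connected_fiber: "connected (fiber Dom x)"
  using partial_flow unfolding partial_flow_def by blast

lemma flow_add:
  "s \<in> fiber Dom x \<Longrightarrow> t \<in> fiber Dom x \<Longrightarrow> s + t \<in> fiber Dom x \<Longrightarrow> phi s (phi t x) = phi (s + t) x"
  using partial_flow unfolding partial_flow_def by blast

lemma fiber_flow_iff:
  assumes "t \<in> fiber Dom x"
  shows "s \<in> fiber Dom (phi t x) \<longleftrightarrow> s + t \<in> fiber Dom x"
proof -
  have "fiber Dom (phi t x) = (\<lambda>s. s - t) ` fiber Dom x"
    using partial_flow assms unfolding partial_flow_def by blast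
  then show ?thesis
    by (auto simp: image_iff intro!: bexI[of _ "s + t"])
qed

lemma fiber_between:
  "a \<in> fiber Dom x \<Longrightarrow> b \<in> fiber Dom x \<Longrightarrow> a \<le> c \<Longrightarrow> c \<le> b \<Longrightarrow> c \<in> fiber Dom x"
  using connected_fiber[of x] unfolding connected_iff_interval by blast

lemma open_fiber: "open (fiber Dom x)"
proof -
  have "open ((\<lambda>t::real. (t, x)) -` Dom)"
    by (rule continuous_open_vimage[OF open_Dom]) (intro continuous_intros)
  moreover have "(\<lambda>t. (t, x)) -` Dom = fiber Dom x"
    by (auto simp: fiber_def)
  ultimately show ?thesis by simp
qed

lemma continuous_on_orbit: "continuous_on (fiber Dom x) (\<lambda>s. phi s x)"
proof -
  have "continuous_on (fiber Dom x) (\<lambda>s. (\<lambda>(t, x). phi t x) (s, x))"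
    by (rule continuous_on_compose2[OF continuous_on_flow])
      (auto intro!: continuous_intros simp: fiber_def)
  then show ?thesis by simp
qed

lemma open_flow_compose_set:
  assumes t: "t \<in> fiber Dom x"
  shows "open {s \<in> fiber Dom (phi t x). phi s (phi t x) = phi (s + t) x}" (is "open ?S")
proof (rule openI)
  fix u assume "u \<in> ?S"
  then have u: "u \<in> fiber Dom (phi t x)" and eq: "phi u (phi t x) = phi (u + t) x"
    by auto
  have ut: "u + t \<in> fiber Dom x"
    using u fiber_flow_iff[OF t] by simp
  obtain e1 where e1: "e1 > 0" "ball 0 e1 \<subseteq> fiber Dom (phi t x)"
    using open_fiber zero_in_fiber open_contains_ball by blast
  obtain e2 where e2: "e2 > 0" "ball 0 e2 \<subseteq> fiber Dom x"
    using open_fiber zero_in_fiber open_contains_ball by blast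
  obtain e3 where e3: "e3 > 0" "ball u e3 \<subseteq> fiber Dom (phi t x)"
    using open_fiber u open_contains_ball by blast
  have "ball u (min e1 (min e2 e3)) \<subseteq> ?S"
  proof
    fix s assume "s \<in> ball u (min e1 (min e2 e3))"
    then have d1: "s - u \<in> fiber Dom (phi t x)" and d2: "s - u \<in> fiber Dom x"
      and d3: "s \<in> fiber Dom (phi t x)"
      using e1 e2 e3 by (auto simp: dist_real_def abs_minus_commute subset_iff)
    have "phi s (phi t x) = phi (s - u) (phi u (phi t x))"
      using flow_add[OF d1 u] d3 by simp
    also have "\<dots> = phi (s - u) (phi (u + t) x)"
      using eq by simp
    also have "\<dots> = phi (s + t) x"
      using flow_add[OF d2 ut] d3 fiber_flow_iff[OF t] by (simp add: algebra_simps)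
    finally show "s \<in> ?S"
      using d3 by simp
  qed
  then show "\<exists>e>0. ball u e \<subseteq> ?S"
    using e1 e2 e3 by (intro exI[of _ "min e1 (min e2 e3)"]) simp
qed

text \<open>The axioms only give the composition law when all three times lie in the fibre of \<open>x\<close>; the
  set of times for which it holds is clopen in the connected fibre of \<open>\<phi>\<^sub>t(x)\<close>.\<close>

lemma flow_compose:
  assumes t: "t \<in> fiber Dom x" and st: "s + t \<in> fiber Dom x"
  shows "phi s (phi t x) = phi (s + t) x"
proof -
  let ?I = "fiber Dom (phi t x)"
  let ?S = "{s \<in> ?I. phi s (phi t x) = phi (s + t) x}"
  have shifted: "continuous_on ?I (\<lambda>s. phi (s + t) x)"
    by (rule continuous_on_compose2[OF continuous_on_orbit[of x]])
      (auto intro!: continuous_intros simp: fiber_flow_iff[OF t])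
  have "closedin (top_of_set ?I) ?S"
    using closedin_continuous_maps_eq[of euclidean "top_of_set ?I" "\<lambda>s. phi s (phi t x)"]
      continuous_on_orbit shifted by simp
  moreover have "openin (top_of_set ?I) ?S"
    using open_openin_trans[OF open_fiber open_flow_compose_set[OF t]] by blast
  moreover have "0 \<in> ?S"
    using zero_in_fiber by simp
  ultimately have "?S = ?I"
    using connected_fiber[of "phi t x"] unfolding connected_clopen by blast
  then show ?thesis
    using st fiber_flow_iff[OF t] by blast
qed

lemma tendsto_flow:
  assumes "(t, z) \<in> Dom" "(tt \<longlongrightarrow> t) F" "(zz \<longlongrightarrow> z) F"
  shows "((\<lambda>n. phi (tt n) (zz n)) \<longlongrightarrow> phi t z) F"
proof -
  have "isCont (\<lambda>(t, x). phi t x) (t, z)"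
    using continuous_on_flow open_Dom assms(1) continuous_on_eq_continuous_at by blast
  from isCont_tendsto_compose[OF this tendsto_Pair[OF assms(2,3)]] show ?thesis
    by simp
qed

lemma eventually_in_Dom:
  assumes "(t, z) \<in> Dom" "(tt \<longlongrightarrow> t) F" "(zz \<longlongrightarrow> z) F"
  shows "eventually (\<lambda>n. (tt n, zz n) \<in> Dom) F"
  using topological_tendstoD[OF tendsto_Pair[OF assms(2,3)] open_Dom assms(1)] .

lemma reach_within_subset: "reach_within Dom phi W A \<subseteq> W"
  unfolding reach_within_def by (force dest: bspec[of _ _ 0])

lemma reach_within_self: "x \<in> W \<Longrightarrow> x \<in> A \<Longrightarrow> x \<in> reach_within Dom phi W A"
  unfolding reach_within_def using zero_in_fiber[of x]
  by (intro CollectI exI[of _ 0]) (auto simp: fiber_def)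

text \<open>Openness comes from the tube lemma applied to the compact time interval \<open>[0, r]\<close>.\<close>

lemma open_reach_within:
  assumes W: "open W" and A: "open A"
  shows "open (reach_within Dom phi W A)"
proof (rule Topological_Spaces.openI)
  fix y assume "y \<in> reach_within Dom phi W A"
  then obtain r where r: "r \<ge> 0" "\<forall>s\<in>{0..r}. (s, y) \<in> Dom \<and> phi s y \<in> W" "phi r y \<in> A"
    unfolding reach_within_def by blast
  let ?f = "\<lambda>(t, x). phi t x"
  let ?swap = "\<lambda>p::'a \<times> real. (snd p, fst p)"
  have "open (?f -` W \<inter> Dom)" "open (?f -` A \<inter> Dom)"
    using continuous_on_open_vimage[OF open_Dom] continuous_on_flow W A by blast+
  then have oW: "open (?swap -` (?f -` W \<inter> Dom))" and oA: "open (Pair r -` (?f -` A \<inter> Dom))"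
    by (auto intro!: continuous_open_vimage continuous_intros simp del: vimage_Int)
  have "{y} \<times> {0..r} \<subseteq> ?swap -` (?f -` W \<inter> Dom)"
    using r(2) by auto
  from Elementary_Topology.tube_lemma[OF compact_Icc oW this]
  obtain X where X: "y \<in> X" "open X" "X \<times> {0..r} \<subseteq> ?swap -` (?f -` W \<inter> Dom)"
    by blast
  let ?T = "X \<inter> Pair r -` (?f -` A \<inter> Dom)"
  have "?T \<subseteq> reach_within Dom phi W A"
  proof
    fix z assume z: "z \<in> ?T"
    have "(s, z) \<in> Dom \<and> phi s z \<in> W" if "s \<in> {0..r}" for s
    proof -
      have "(z, s) \<in> ?swap -` (?f -` W \<inter> Dom)"
        using X(3) z that by blast
      then show ?thesis
        by simp
    qed
    moreover have "phi r z \<in> A"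
      using z by simp
    ultimately show "z \<in> reach_within Dom phi W A"
      using r(1) unfolding reach_within_def by blast
  qed
  moreover have "y \<in> ?T" "open ?T"
    using X r oA by auto
  ultimately show "\<exists>T. open T \<and> y \<in> T \<and> T \<subseteq> reach_within Dom phi W A"
    by blast
qed

lemma reach_within_backward:
  assumes x: "x \<in> reach_within Dom phi W A" and a: "a \<ge> 0" "-a \<in> fiber Dom x"
    and past: "\<forall>q\<in>{0..a}. phi (-q) x \<in> W"
  shows "phi (-a) x \<in> reach_within Dom phi W A"
proof -
  obtain r where r: "r \<ge> 0" "\<forall>s\<in>{0..r}. (s, x) \<in> Dom \<and> phi s x \<in> W" "phi r x \<in> A"
    using x unfolding reach_within_def by blast
  have rf: "r \<in> fiber Dom x"
    using r by (auto simp: fiber_def)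
  have "(s, phi (-a) x) \<in> Dom \<and> phi s (phi (-a) x) \<in> W" if s: "s \<in> {0..a + r}" for s
  proof -
    have sf: "s - a \<in> fiber Dom x"
      using fiber_between[OF a(2) rf] s by simp
    have "phi (s - a) x \<in> W"
    proof (cases "s \<le> a")
      case True
      then show ?thesis
        using past[rule_format, of "a - s"] s by simp
    next
      case False
      then show ?thesis
        using r(2) s by simp
    qed
    then show ?thesis
      using sf fiber_flow_iff[OF a(2), of s] flow_compose[OF a(2), of s]
      by (simp add: fiber_def)
  qed
  moreover have "phi (a + r) (phi (-a) x) \<in> A"
    using flow_compose[OF a(2), of "a + r"] rf r(3) by simp
  ultimately show ?thesis
    using r a unfolding reach_within_def by (intro CollectI exI[of _ "a + r"]) auto
qed

lemma reach_within_segment: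
  assumes t: "t \<in> fiber Dom x" and reach: "phi t x \<in> reach_within Dom phi W A"
    and s: "s \<in> {0..t}" and segment: "\<And>q. q \<in> {s..t} \<Longrightarrow> phi q x \<in> W"
  shows "phi s x \<in> reach_within Dom phi W A"
proof -
  have s_fiber: "s \<in> fiber Dom x"
    using fiber_between[OF zero_in_fiber t] s by simp
  have "phi (-(t - s)) (phi t x) \<in> reach_within Dom phi W A"
  proof (rule reach_within_backward[OF reach])
    show "-(t - s) \<in> fiber Dom (phi t x)"
      using fiber_flow_iff[OF t] s_fiber by simp
    show "\<forall>q\<in>{0..t - s}. phi (-q) (phi t x) \<in> W"
    proof
      fix q assume q: "q \<in> {0..t - s}"
      then have "t - q \<in> fiber Dom x"
        using fiber_between[OF s_fiber t] by simp
      then show "phi (-q) (phi t x) \<in> W"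
        using flow_compose[OF t, of "-q"] segment[of "t - q"] q by simp
    qed
  qed (use s in simp)
  then show ?thesis
    using flow_compose[OF t, of "-(t - s)"] s_fiber by simp
qed

lemma closed_if_invariant_isolating_nbhd:
  assumes inv: "flow_invariant Dom phi L" and iso: "isolating_nbhd Dom phi L N"
  shows "closed L"
  unfolding closed_sequential_limits
proof (intro allI impI)
  fix l z assume lz: "(\<forall>n. l n \<in> L) \<and> l \<longlonglongrightarrow> z"
  have "phi t z \<in> N" if t: "(t, z) \<in> Dom" for t
  proof (rule Lim_in_closed_set)
    show "closed N"
      using iso compact_imp_closed unfolding isolating_nbhd_def by blast
    show "(\<lambda>n. phi t (l n)) \<longlonglongrightarrow> phi t z"
      using tendsto_flow[OF t tendsto_const] lz by blast
    show "eventually (\<lambda>n. phi t (l n) \<in> N) sequentially"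
    proof (rule eventually_mono[OF eventually_in_Dom[OF t tendsto_const]])
      fix n assume "(t, l n) \<in> Dom"
      then show "phi t (l n) \<in> N"
        using lz inv iso interior_subset
        unfolding flow_invariant_def fiber_def isolating_nbhd_def by blast
    qed (use lz in blast)
  qed simp
  then show "z \<in> L"
    using iso unfolding isolating_nbhd_def fiber_def by blast
qed

lemma limit_of_arrivals_meets_closed:
  assumes L: "closed L" "L \<noteq> {}" and t: "t \<in> fiber Dom y"
    and r: "\<And>n. r n \<in> {0..t}" and y': "y' \<longlonglongrightarrow> y" and e: "e \<longlonglongrightarrow> 0"
    and arrival: "\<And>n. infdist (phi (r n) (y' n)) L \<le> e n"
  shows "\<exists>\<tau>\<in>{0..t}. phi \<tau> y \<in> L"
proof -
  obtain \<tau> \<sigma> where \<tau>: "\<tau> \<in> {0..t}" "strict_mono \<sigma>" "(r \<circ> \<sigma>) \<longlonglongrightarrow> \<tau>"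
    using seq_compactE[OF compact_imp_seq_compact[OF compact_Icc]] r by metis
  have "\<tau> \<in> fiber Dom y"
    using fiber_between[OF zero_in_fiber t] \<tau>(1) by simp
  then have "(\<tau>, y) \<in> Dom"
    by (simp add: fiber_def)
  moreover have "(\<lambda>n. r (\<sigma> n)) \<longlonglongrightarrow> \<tau>" "(\<lambda>n. y' (\<sigma> n)) \<longlonglongrightarrow> y" "(\<lambda>n. e (\<sigma> n)) \<longlonglongrightarrow> 0"
    using \<tau>(3) LIMSEQ_subseq_LIMSEQ[OF y' \<tau>(2)] LIMSEQ_subseq_LIMSEQ[OF e \<tau>(2)]
    by (simp_all add: comp_def)
  ultimately have "infdist (phi \<tau> y) L \<le> 0"
    by (intro tendsto_le[OF trivial_limit_sequentially _ tendsto_infdist[OF tendsto_flow]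
          always_eventually]) (auto intro: arrival)
  then have "phi \<tau> y \<in> L"
    using in_closed_iff_infdist_zero[OF L] infdist_nonneg order_antisym by blast
  then show ?thesis
    using \<tau>(1) by blast
qed

lemma reach_within_limit_orbit:
  assumes inv: "flow_invariant Dom phi L" and L: "closed L" "L \<subseteq> closure W"
    and reach: "\<And>n. y' n \<in> reach_within Dom phi W (\<Union>l\<in>L. ball l (e n))"
    and e: "e \<longlonglongrightarrow> 0" and y': "y' \<longlonglongrightarrow> y"
    and t: "t \<ge> 0" "t \<in> fiber Dom y"
  shows "phi t y \<in> closure W"
proof (rule ccontr)
  assume out: "phi t y \<notin> closure W"
  have "\<exists>r. r \<ge> 0 \<and> (\<forall>s\<in>{0..r}. (s, y' n) \<in> Dom \<and> phi s (y' n) \<in> W)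
             \<and> (\<exists>l\<in>L. dist l (phi r (y' n)) < e n)" for n
    using reach[of n] unfolding reach_within_def by auto
  then obtain r where r: "\<And>n. r n \<ge> 0"
    "\<And>n s. s \<in> {0..r n} \<Longrightarrow> (s, y' n) \<in> Dom \<and> phi s (y' n) \<in> W"
    "\<And>n. \<exists>l\<in>L. dist l (phi (r n) (y' n)) < e n"
    by metis
  have arrival: "infdist (phi (r n) (y' n)) L \<le> e n" for n
    using r(3)[of n] infdist_le[of _ L "phi (r n) (y' n)"] by (force simp: dist_commute)
  have "(t, y) \<in> Dom"
    using t by (simp add: fiber_def)
  from topological_tendstoD[OF tendsto_flow[OF this tendsto_const y'] open_Compl[OF closed_closure]]
  have "eventually (\<lambda>n. phi t (y' n) \<in> - closure W) sequentially"
    using out by simp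
  then have "eventually (\<lambda>n. r n < t) sequentially"
  proof (rule eventually_mono)
    fix n assume "phi t (y' n) \<in> - closure W"
    then show "r n < t"
      using r(2)[of t n] closure_subset t(1) by force
  qed
  then obtain M where M: "\<And>n. n \<ge> M \<Longrightarrow> r n < t"
    unfolding eventually_sequentially by blast
  have "\<exists>\<tau>\<in>{0..t}. phi \<tau> y \<in> L"
  proof (rule limit_of_arrivals_meets_closed[OF L(1) _ t(2),
        where r = "\<lambda>n. r (n + M)" and y' = "\<lambda>n. y' (n + M)" and e = "\<lambda>n. e (n + M)"])
    show "L \<noteq> {}"
      using r(3) by blast
    show "r (n + M) \<in> {0..t}" for n
      using M[of "n + M"] r(1) by simp
  qed (use LIMSEQ_ignore_initial_segment[OF y'] LIMSEQ_ignore_initial_segment[OF e] arrival in auto)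
  then obtain \<tau> where \<tau>: "\<tau> \<in> {0..t}" "phi \<tau> y \<in> L"
    by blast
  then have \<tau>_fiber: "\<tau> \<in> fiber Dom y"
    using fiber_between[OF zero_in_fiber t(2)] by simp
  then have "t - \<tau> \<in> fiber Dom (phi \<tau> y)"
    using fiber_flow_iff t(2) by simp
  then have "phi (t - \<tau>) (phi \<tau> y) \<in> L"
    using inv \<tau>(2) unfolding flow_invariant_def by blast
  then have "phi t y \<in> L"
    using flow_compose[OF \<tau>_fiber, of "t - \<tau>"] t(2) by simp
  then show False
    using out L(2) by blast
qed

lemma pflow_reverse: "pflow (reverse_dom Dom) (reverse_flow phi)"
proof -
  let ?neg = "\<lambda>p::real \<times> 'a. (- fst p, snd p)"
  have "?neg -` Dom = reverse_dom Dom"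
    unfolding reverse_dom_def by force
  moreover have "open (?neg -` Dom)"
    by (rule continuous_open_vimage[OF open_Dom]) (intro continuous_intros)
  ultimately have "open (reverse_dom Dom)"
    by simp
  moreover have "continuous_on (reverse_dom Dom) (\<lambda>(t, x). reverse_flow phi t x)"
  proof -
    have "continuous_on (reverse_dom Dom) (\<lambda>p. (\<lambda>(t, x). phi t x) (?neg p))"
      by (rule continuous_on_compose2[OF continuous_on_flow])
        (auto intro!: continuous_intros simp: reverse_dom_def)
    then show ?thesis
      by (simp add: reverse_flow_def case_prod_unfold)
  qed
  moreover have "connected (fiber (reverse_dom Dom) x)" for x
  proof -
    have "fiber (reverse_dom Dom) x = uminus ` fiber Dom x"
      by (auto simp: fiber_reverse_dom image_iff intro!: bexI[of _ "- _"])
    moreover have "connected (uminus ` fiber Dom x)"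
      by (rule connected_continuous_image[OF _ connected_fiber]) (intro continuous_intros)
    ultimately show ?thesis
      by simp
  qed
  moreover have "fiber (reverse_dom Dom) (reverse_flow phi t x) = (\<lambda>s. s - t) ` fiber (reverse_dom Dom) x"
    if "t \<in> fiber (reverse_dom Dom) x" for x t
    using that fiber_flow_iff[of "-t" x]
    by (auto simp: fiber_reverse_dom reverse_flow_def image_iff intro!: bexI[of _ "_ + t"])
  moreover have "reverse_flow phi s (reverse_flow phi t x) = reverse_flow phi (s + t) x"
    if "s \<in> fiber (reverse_dom Dom) x" "t \<in> fiber (reverse_dom Dom) x" "s + t \<in> fiber (reverse_dom Dom) x"
    for x s t
    using flow_add[of "-s" x "-t"] that by (simp add: fiber_reverse_dom reverse_flow_def)
  ultimately show ?thesis
    using zero_in_fiber unfolding pflow_def partial_flow_def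
    by (auto simp: fiber_reverse_dom reverse_flow_def case_prod_unfold)
qed

lemma open_two_sided_reach: "open W \<Longrightarrow> open A \<Longrightarrow> open (two_sided_reach Dom phi W A)"
  using open_reach_within pflow.open_reach_within[OF pflow_reverse]
  unfolding two_sided_reach_def by blast

lemma two_sided_reach_subset: "two_sided_reach Dom phi W A \<subseteq> W"
  using reach_within_subset unfolding two_sided_reach_def by blast

lemma subset_two_sided_reach: "S \<subseteq> W \<Longrightarrow> S \<subseteq> A \<Longrightarrow> S \<subseteq> two_sided_reach Dom phi W A"
  using reach_within_self pflow.reach_within_self[OF pflow_reverse]
  unfolding two_sided_reach_def by blast

lemma flow_convex_two_sided_reach:
  assumes open_sets: "open W" "open A"
    and closure_in: "closure (two_sided_reach Dom phi W A) \<subseteq> W"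
  shows "flow_convex Dom phi (two_sided_reach Dom phi W A)"
proof -
  interpret bwd: pflow "reverse_dom Dom" "reverse_flow phi"
    by (rule pflow_reverse)
  let ?U = "two_sided_reach Dom phi W A"
  have "phi s x \<in> ?U"
    if t: "t \<in> fiber Dom x" and x: "x \<in> ?U" "phi t x \<in> ?U"
      and segment: "(\<lambda>s. phi s x) ` {0..t} \<subseteq> closure ?U" and s: "s \<in> {0..t}" for t x s
  proof -
    have segment_W: "phi q x \<in> W" if "q \<in> {0..t}" for q
      using segment closure_in that by blast
    have s_fiber: "s \<in> fiber Dom x"
      using fiber_between[OF zero_in_fiber t] s by simp
    have "phi s x \<in> reach_within Dom phi W A"
    proof (rule reach_within_segment[OF t _ s])
      show "phi t x \<in> reach_within Dom phi W A"
        using x(2) unfolding two_sided_reach_def by blast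
      show "phi q x \<in> W" if "q \<in> {s..t}" for q
        using segment_W that s by simp
    qed
    moreover have "reverse_flow phi (-s) x \<in> reach_within (reverse_dom Dom) (reverse_flow phi) W A"
    proof (rule bwd.reach_within_backward)
      show "x \<in> reach_within (reverse_dom Dom) (reverse_flow phi) W A"
        using x(1) unfolding two_sided_reach_def by blast
      show "-s \<in> fiber (reverse_dom Dom) x"
        using s_fiber by (simp add: fiber_reverse_dom)
      show "\<forall>q\<in>{0..s}. reverse_flow phi (-q) x \<in> W"
        using segment_W s by (simp add: reverse_flow_def)
    qed (use s in simp)
    ultimately show ?thesis
      unfolding two_sided_reach_def reverse_flow_def by simp
  qed
  then show ?thesis
    using open_two_sided_reach[OF open_sets] unfolding flow_convex_def image_subset_iff by blast
qed

lemma two_sided_reach_limit_orbit: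
  assumes inv: "flow_invariant Dom phi L" and L: "closed L" "L \<subseteq> closure W"
    and reach: "\<And>n. z n \<in> two_sided_reach Dom phi W (\<Union>l\<in>L. ball l (e n))"
    and e: "e \<longlonglongrightarrow> 0" and z: "z \<longlonglongrightarrow> y" and t: "t \<in> fiber Dom y"
  shows "phi t y \<in> closure W"
proof (cases "t \<ge> 0")
  case True
  show ?thesis
    using reach unfolding two_sided_reach_def
    by (intro reach_within_limit_orbit[OF inv L _ e z True t]) blast
next
  case False
  interpret bwd: pflow "reverse_dom Dom" "reverse_flow phi"
    by (rule pflow_reverse)
  have "reverse_flow phi (-t) y \<in> closure W"
    using reach False t unfolding two_sided_reach_def
    by (intro bwd.reach_within_limit_orbit[OF flow_invariant_reverse[OF inv] L _ e z])
      (auto simp: fiber_reverse_dom)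
  then show ?thesis
    by (simp add: reverse_flow_def)
qed

lemma closure_two_sided_reach_subset_interior:
  assumes inv: "flow_invariant Dom phi L" and iso: "isolating_nbhd Dom phi L N"
  shows "\<exists>e>0. closure (two_sided_reach Dom phi (interior N) (\<Union>l\<in>L. ball l e)) \<subseteq> interior N"
proof (rule ccontr)
  define e :: "nat \<Rightarrow> real" where "e n = inverse (real (Suc n))" for n
  define U where "U n = two_sided_reach Dom phi (interior N) (\<Union>l\<in>L. ball l (e n))" for n
  have N: "compact N" "L \<subseteq> interior N" and escape: "\<And>y. y \<notin> L \<Longrightarrow> \<exists>t\<in>fiber Dom y. phi t y \<notin> N"
    using iso unfolding isolating_nbhd_def by auto
  have "closed N"
    using N(1) by (rule compact_imp_closed)
  then have closure_N: "closure (interior N) \<subseteq> N"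
    by (simp add: closure_minimal interior_subset)
  have L: "closed L" "L \<subseteq> closure (interior N)"
    using closed_if_invariant_isolating_nbhd[OF inv iso] N(2) closure_subset by auto
  have e_pos: "e n > 0" for n
    by (simp add: e_def)
  assume "\<not> ?thesis"
  then have "\<exists>y. y \<in> closure (U n) \<and> y \<notin> interior N" for n
    using e_pos unfolding U_def by blast
  then obtain y where y: "\<And>n. y n \<in> closure (U n)" "\<And>n. y n \<notin> interior N"
    by metis
  have "closure (U n) \<subseteq> N" for n
    using closure_mono[OF two_sided_reach_subset] closure_N unfolding U_def by blast
  then have "\<forall>n. y n \<in> N - interior N"
    using y by blast
  then obtain y0 \<sigma> where y0: "y0 \<in> N - interior N" "strict_mono \<sigma>" "(y \<circ> \<sigma>) \<longlonglongrightarrow> y0"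
    using seq_compactE[OF compact_imp_seq_compact[OF compact_diff[OF N(1) open_interior]]] by metis
  obtain z where z: "\<And>n. z n \<in> U (\<sigma> n)" "z \<longlonglongrightarrow> y0"
    using approximate_in_closures[of "y \<circ> \<sigma>" "U \<circ> \<sigma>"] y(1) y0(3) by auto
  have e_lim: "(e \<circ> \<sigma>) \<longlonglongrightarrow> 0"
    using LIMSEQ_subseq_LIMSEQ[OF LIMSEQ_inverse_real_of_nat y0(2)] by (simp add: e_def comp_def)
  have "y0 \<notin> L"
    using y0(1) N(2) by blast
  then obtain t where t: "t \<in> fiber Dom y0" "phi t y0 \<notin> N"
    using escape by blast
  moreover have "phi t y0 \<in> closure (interior N)"
    using z(1) unfolding U_def
    by (intro two_sided_reach_limit_orbit[OF inv L _ e_lim z(2) t(1)]) simp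
  ultimately show False
    using closure_N by blast
qed

end

theorem mainTheorem3:
  fixes Dom :: "(real \<times> 'a::metric_space) set" and phi :: "real \<Rightarrow> 'a \<Rightarrow> 'a"
    and L N :: "'a set"
  assumes "partial_flow Dom phi"
    and "isolated_set Dom phi L"
    and "isolating_nbhd Dom phi L N"
  shows "\<exists>U. open U \<and> flow_convex Dom phi U \<and> L \<subseteq> U \<and> U \<subseteq> N"
proof -
  interpret pflow Dom phi
    by (rule pflow.intro[OF assms(1)])
  have inv: "flow_invariant Dom phi L"
    using assms(2) unfolding isolated_set_def by blast
  obtain e :: real where "e > 0"
    and closure_in: "closure (two_sided_reach Dom phi (interior N) (\<Union>l\<in>L. ball l e)) \<subseteq> interior N"
    using closure_two_sided_reach_subset_interior[OF inv assms(3)] by blast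
  let ?U = "two_sided_reach Dom phi (interior N) (\<Union>l\<in>L. ball l e)"
  have "open (\<Union>l\<in>L. ball l e)"
    by blast
  then have "open ?U" "flow_convex Dom phi ?U"
    by (rule open_two_sided_reach[OF open_interior],
        rule flow_convex_two_sided_reach[OF open_interior _ closure_in])
  moreover have "L \<subseteq> ?U"
  proof (rule subset_two_sided_reach)
    show "L \<subseteq> interior N"
      using assms(3) unfolding isolating_nbhd_def by blast
    show "L \<subseteq> (\<Union>l\<in>L. ball l e)"
      using \<open>e > 0\<close> by auto
  qed
  moreover have "?U \<subseteq> N"
    using two_sided_reach_subset interior_subset by (rule order_trans)
  ultimately show ?thesis
    by blast
qed

end
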